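(* Let $f=\rho M_\Omega$ with $\rho>0$ and $\Omega=\Omega[f]\in\mathbb{S}^{d-1}$, and let $P_f=I_d-\Omega\otimes\Omega$. Then: (1) the linearization $\mathcal{L}_fg:=\frac{d}{ds}\big|_{s=0}Q(f+sg)$ is $$\mathcal{L}_fg=\mathrm{div}_v\Big\{\sigma\nabla_vg+g\nabla_v\Phi_\Omega-\frac{f}{\int(v\cdot\Omega)f\,dv}P_f\int g(v)v\,dv\Big\};$$ in particular $\mathcal{L}_{\rho M_\Omega}=\mathcal{L}_{M_\Omega}$; (2) the formal adjoint of $\mathcal{L}_f$ is $$\mathcal{L}_f^\star\psi=\sigma\frac{\mathrm{div}_v(M_\Omega\nabla_v\psi)}{M_\Omega}+P_fv\cdot W[\psi],\qquad W[\psi]:=\frac{\int M_\Omega\nabla_v\psi\,dv}{\int(v\cdot\Omega)M_\Omega\,dv};$$ (3) $\mathcal{L}_f\big(f\,(v-\Omega)\big)=\sigma\nabla_vf-\mathrm{div}_v\big(f\,\mathcal{M}_\Omega/c_1\big)$ (applied componentwise), where $\mathrm{div}_v$ of a matrix is taken row by row.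
   Context: Standing setting: $d\ge2$, $\sigma>0$, $V:[0,\infty)\to\mathbb{R}$ a potential used as the radial function $v\mapsto V(|v|)$. For $\Omega\in\mathbb{S}^{d-1}$ set $\Phi_\Omega(v)=\frac{|v-\Omega|^2}{2}+V(|v|)$, $Z_\Omega=\int e^{-\Phi_\Omega/\sigma}dv<\infty$, $M_\Omega=e^{-\Phi_\Omega/\sigma}/Z_\Omega$, with $\int|v|^2M_\Omega<\infty$. For a density $f$: $\Omega[f]=\int fv\,dv/|\int fv\,dv|$ if $\int fv\,dv\ne0$, else $0$. $Q(f)=\mathrm{div}_v\{\sigma\nabla_vf+f(v-\Omega[f])+f\nabla_vV(|v|)\}$. $c_1:=\int(v\cdot\Omega)M_\Omega(v)\,dv$ and the pressure tensor $\mathcal{M}_\Omega:=\int(v-\Omega)\otimes(I_d-\Omega\otimes\Omega)(v-\Omega)\,M_\Omega(v)\,dv$. *)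

theory Defs
  imports "HOL-Analysis.Analysis"
begin

text \<open>Velocities live in \<open>real^'n\<close>, d = CARD('n). Integrals are Lebesgue (Bochner)
integrals over \<open>lborel\<close>.\<close>

definition partial_i :: "'n::finite \<Rightarrow> (real^'n \<Rightarrow> real) \<Rightarrow> real^'n \<Rightarrow> real" where
  "partial_i i h v = frechet_derivative h (at v) (axis i 1)"

definition grad :: "(real^'n::finite \<Rightarrow> real) \<Rightarrow> real^'n \<Rightarrow> real^'n" where
  "grad h v = (\<chi> i. partial_i i h v)"

definition divg :: "(real^'n::finite \<Rightarrow> real^'n) \<Rightarrow> real^'n \<Rightarrow> real" where
  "divg F v = (\<Sum>i\<in>UNIV. partial_i i (\<lambda>w. F w $ i) v)"

definition C2 :: "(real^'n::finite \<Rightarrow> real) \<Rightarrow> bool" where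
  "C2 h \<longleftrightarrow> (\<forall>v. h differentiable (at v))
     \<and> (\<forall>i v. (\<lambda>w. partial_i i h w) differentiable (at v))
     \<and> (\<forall>i j. continuous_on UNIV (\<lambda>w. partial_i j (\<lambda>u. partial_i i h u) w))"

definition compact_supp :: "(real^'n::finite \<Rightarrow> real) \<Rightarrow> bool" where
  "compact_supp g \<longleftrightarrow> compact (closure {v. g v \<noteq> 0})"

definition outer :: "real^'n::finite \<Rightarrow> real^'n \<Rightarrow> real^'n^'n" where
  "outer a b = (\<chi> i j. a $ i * b $ j)"

definition projP :: "real^'n::finite \<Rightarrow> real^'n^'n" where
  "projP \<Omega> = mat 1 - outer \<Omega> \<Omega>"

definition Phi :: "(real \<Rightarrow> real) \<Rightarrow> real^'n::finite \<Rightarrow> real^'n \<Rightarrow> real" where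
  "Phi V \<Omega> v = (norm (v - \<Omega>))\<^sup>2 / 2 + V (norm v)"

definition Zc :: "(real \<Rightarrow> real) \<Rightarrow> real \<Rightarrow> real^'n::finite \<Rightarrow> real" where
  "Zc V \<sigma> \<Omega> = (\<integral>v. exp (- Phi V \<Omega> v / \<sigma>) \<partial>lborel)"

definition Mx :: "(real \<Rightarrow> real) \<Rightarrow> real \<Rightarrow> real^'n::finite \<Rightarrow> real^'n \<Rightarrow> real" where
  "Mx V \<sigma> \<Omega> v = exp (- Phi V \<Omega> v / \<sigma>) / Zc V \<sigma> \<Omega>"

definition Omega_of :: "(real^'n::finite \<Rightarrow> real) \<Rightarrow> real^'n" where
  "Omega_of f = (let J = (\<integral>v. f v *\<^sub>R v \<partial>lborel) in if J \<noteq> 0 then J /\<^sub>R norm J else 0)"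

definition Qop :: "(real \<Rightarrow> real) \<Rightarrow> real \<Rightarrow> (real^'n::finite \<Rightarrow> real) \<Rightarrow> real^'n \<Rightarrow> real" where
  "Qop V \<sigma> f v = divg (\<lambda>w. \<sigma> *\<^sub>R grad f w + f w *\<^sub>R (w - Omega_of f)
                               + f w *\<^sub>R grad (\<lambda>u. V (norm u)) w) v"

definition Lin :: "(real \<Rightarrow> real) \<Rightarrow> real \<Rightarrow> (real^'n::finite \<Rightarrow> real) \<Rightarrow> (real^'n \<Rightarrow> real) \<Rightarrow> real^'n \<Rightarrow> real" where
  "Lin V \<sigma> f g v = deriv (\<lambda>s. Qop V \<sigma> (\<lambda>w. f w + s * g w) v) 0"

definition c1 :: "(real \<Rightarrow> real) \<Rightarrow> real \<Rightarrow> real^'n::finite \<Rightarrow> real" where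
  "c1 V \<sigma> \<Omega> = (\<integral>v. (v \<bullet> \<Omega>) * Mx V \<sigma> \<Omega> v \<partial>lborel)"

definition pressure :: "(real \<Rightarrow> real) \<Rightarrow> real \<Rightarrow> real^'n::finite \<Rightarrow> real^'n^'n" where
  "pressure V \<sigma> \<Omega> = (\<integral>v. Mx V \<sigma> \<Omega> v *\<^sub>R outer (v - \<Omega>) (projP \<Omega> *v (v - \<Omega>)) \<partial>lborel)"

end

theory Submission
  imports Defs
begin

text \<open>
  Along \<open>f + s g\<close> the operator \<open>Q\<close> is affine in \<open>s\<close> except through the mean direction
  \<open>\<Omega>[f + s g] = sgn (J_f + s J_g)\<close>, \<open>J_h = \<integral> h v dv\<close>, whose derivative at \<open>s = 0\<close> is
  \<open>P_\<Omega> J_g / |J_f|\<close>. For \<open>f = \<rho> M_\<Omega>\<close> one has \<open>|J_f| = \<rho> c\<^sub>1 = \<integral> (v \<cdot> \<Omega>) f\<close>, so \<open>\<rho>\<close> cancels and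
  \<open>L_f g = div (flux g)\<close> with a flux independent of \<open>\<rho>\<close>. Testing against compactly supported
  \<open>\<psi>\<close>, both \<open>\<integral> (L_f g) \<psi>\<close> and \<open>\<integral> g L\<^sup>\<star>\<psi>\<close> equal \<open>- \<integral> flux g \<cdot> \<nabla>\<psi>\<close>: integrate by parts
  and use \<open>\<nabla>M_\<Omega> = - M_\<Omega> \<nabla>\<Phi>_\<Omega> / \<sigma>\<close> and the symmetry of \<open>P_\<Omega>\<close>. Finally, for
  \<open>g = f (v - \<Omega>)\<^sub>i\<close> the same identity for \<open>\<nabla>M_\<Omega>\<close> collapses \<open>\<sigma> \<nabla>g + g \<nabla>\<Phi>_\<Omega>\<close> to \<open>\<sigma> f e\<^sub>i\<close>,
  while \<open>P_\<Omega> \<integral> g v dv\<close> is \<open>\<rho>\<close> times the \<open>i\<close>-th row of the pressure tensor.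
\<close>

section \<open>Partial derivatives and divergence\<close>

lemma partial_i_eqI:
  assumes "(h has_derivative D) (at v)" "D (axis i 1) = x"
  shows "partial_i i h v = x"
  using assms frechet_derivative_at unfolding partial_i_def by metis

lemma has_derivative_grad:
  fixes h :: "real^'n::finite \<Rightarrow> real"
  assumes "h differentiable (at v)"
  shows "(h has_derivative (\<lambda>d. grad h v \<bullet> d)) (at v)"
proof -
  obtain D where D: "(h has_derivative D) (at v)"
    using assms differentiable_def by blast
  have "D d = grad h v \<bullet> d" for d
  proof -
    have "D d = D (\<Sum>j\<in>UNIV. d$j *\<^sub>R axis j 1)"
      using basis_expansion[of d] by (simp add: scalar_mult_eq_scaleR)
    also have "\<dots> = (\<Sum>j\<in>UNIV. d$j * D (axis j 1))"
      using has_derivative_linear[OF D] by (simp add: linear_sum linear_scale)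
    also have "\<dots> = grad h v \<bullet> d"
      unfolding grad_def inner_vec_def using partial_i_eqI[OF D refl]
      by (simp add: mult.commute)
    finally show ?thesis .
  qed
  then have "D = (\<lambda>d. grad h v \<bullet> d)" by auto
  with D show ?thesis by simp
qed

lemma axis_one_nth: "axis i (1::real) $ j = (if j = i then 1 else 0)"
  by (simp add: axis_def)

lemma grad_inner_axis [simp]: "grad h v \<bullet> axis i 1 = partial_i i h v"
  by (simp add: grad_def inner_axis)

lemma has_derivative_vec_nth: "((\<lambda>w::real^'n::finite. w $ j) has_derivative (\<lambda>d. d $ j)) F"
  by (rule bounded_linear_imp_has_derivative[OF bounded_linear_vec_nth])

lemma differentiable_vec_nth: "(\<lambda>w::real^'n::finite. w $ j) differentiable (at v)"
  using has_derivative_vec_nth differentiableI by blast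

lemma continuous_on_UNIV_differentiable:
  "(\<And>v. h differentiable (at v)) \<Longrightarrow> continuous_on UNIV h"
  by (meson differentiable_at_imp_differentiable_on differentiable_imp_continuous_on)

lemma partial_i_mult:
  fixes h1 h2 :: "real^'n::finite \<Rightarrow> real"
  assumes "h1 differentiable (at v)" "h2 differentiable (at v)"
  shows "partial_i i (\<lambda>w. h1 w * h2 w) v = partial_i i h1 v * h2 v + h1 v * partial_i i h2 v"
  using has_derivative_mult[OF has_derivative_grad[OF assms(1)] has_derivative_grad[OF assms(2)]]
  by (rule partial_i_eqI) (simp add: algebra_simps)

lemma partial_i_eq_0_outside:
  fixes h :: "real^'n::finite \<Rightarrow> real"
  assumes "closed K" "\<And>v. v \<notin> K \<Longrightarrow> h v = 0" "v \<notin> K"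
  shows "partial_i i h v = 0"
proof -
  have "(h has_derivative (\<lambda>d. 0)) (at v)"
    by (rule has_derivative_transform_within_open[where f="\<lambda>w. 0" and s="- K"])
      (use assms in auto)
  then show ?thesis by (rule partial_i_eqI) simp
qed

lemma divg_scaleR:
  fixes h :: "real^'n::finite \<Rightarrow> real"
  assumes "h differentiable (at v)" "\<And>i. (\<lambda>w. F w $ i) differentiable (at v)"
  shows "divg (\<lambda>w. h w *\<^sub>R F w) v = h v * divg F v + grad h v \<bullet> F v"
  unfolding divg_def inner_vec_def sum_distrib_left sum.distrib[symmetric]
  by (intro sum.cong refl) (simp add: partial_i_mult[OF assms(1,2)] grad_def)

lemma divg_scaleR_const:
  fixes h :: "real^'n::finite \<Rightarrow> real"
  assumes "h differentiable (at v)"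
  shows "divg (\<lambda>w. h w *\<^sub>R c) v = grad h v \<bullet> c"
  using divg_scaleR[OF assms, of "\<lambda>w. c"] by (simp add: divg_def partial_i_eqI[OF has_derivative_const])

lemma continuous_on_grad:
  "(\<And>i. continuous_on UNIV (partial_i i h)) \<Longrightarrow> continuous_on UNIV (grad h)"
  unfolding grad_def[abs_def] by (rule continuous_on_vec_lambda)

lemma C2D:
  assumes "C2 h"
  shows "\<And>v. h differentiable (at v)" "\<And>i v. partial_i i h differentiable (at v)"
    "\<And>i j. continuous_on UNIV (partial_i j (partial_i i h))"
    "continuous_on UNIV h" "\<And>i. continuous_on UNIV (partial_i i h)"
  using assms unfolding C2_def by (auto intro: continuous_on_UNIV_differentiable)

section \<open>Integration by parts\<close>

lemma integrable_continuous_compact_support: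
  fixes h :: "real^'n::finite \<Rightarrow> 'b::{banach, second_countable_topology}"
  assumes "continuous_on UNIV h" "compact K" "\<And>v. v \<notin> K \<Longrightarrow> h v = 0"
  shows "integrable lborel h"
proof -
  have "integrable lborel (\<lambda>x. indicator K x *\<^sub>R h x)"
    by (rule borel_integrable_compact[OF assms(2) continuous_on_subset[OF assms(1)]]) simp
  moreover have "(\<lambda>x. indicator K x *\<^sub>R h x) = h"
    using assms(3) by (auto simp: fun_eq_iff indicator_def)
  ultimately show ?thesis by simp
qed

lemma compact_supportD:
  fixes h :: "real^'n::finite \<Rightarrow> real"
  assumes "compact_supp h"
  obtains K where "compact K" "\<And>v. v \<notin> K \<Longrightarrow> h v = 0"
    "\<And>i v. v \<notin> K \<Longrightarrow> partial_i i h v = 0"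
proof
  let ?K = "closure {v. h v \<noteq> 0}"
  show "compact ?K" using assms unfolding compact_supp_def .
  show zero: "h v = 0" if "v \<notin> ?K" for v
    using that closure_subset[of "{v. h v \<noteq> 0}"] by auto
  show "partial_i i h v = 0" if "v \<notin> ?K" for i v
    by (rule partial_i_eq_0_outside[OF closed_closure zero that])
qed

lemma lborel_integral_translate:
  fixes H :: "'a::euclidean_space \<Rightarrow> 'b::{banach, second_countable_topology}"
  assumes "H \<in> borel_measurable borel"
  shows "integrable lborel (\<lambda>v. H (c + v)) \<longleftrightarrow> integrable lborel H"
    and "(\<integral>v. H (c + v) \<partial>lborel) = (\<integral>v. H v \<partial>lborel)"
proof -
  have "integrable lborel H \<longleftrightarrow> integrable (distr lborel borel ((+) c)) H"
    by (simp add: lborel_distr_plus)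
  also have "\<dots> \<longleftrightarrow> integrable lborel (\<lambda>v. H (c + v))"
    by (rule integrable_distr_eq) (use assms in auto)
  finally show "integrable lborel (\<lambda>v. H (c + v)) \<longleftrightarrow> integrable lborel H" ..
  have "(\<integral>v. H v \<partial>lborel) = (\<integral>v. H v \<partial>(distr lborel borel ((+) c)))"
    by (simp add: lborel_distr_plus)
  also have "\<dots> = (\<integral>v. H (c + v) \<partial>lborel)"
    by (rule integral_distr) (use assms in auto)
  finally show "(\<integral>v. H (c + v) \<partial>lborel) = (\<integral>v. H v \<partial>lborel)" ..
qed

lemma has_real_derivative_along_axis:
  fixes H :: "real^'n::finite \<Rightarrow> real"
  assumes "\<And>v. H differentiable (at v)"
  shows "((\<lambda>t. H (t *\<^sub>R axis i 1 + v)) has_real_derivative partial_i i H (x *\<^sub>R axis i 1 + v)) (at x)"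
proof -
  have "((\<lambda>t::real. t *\<^sub>R axis i 1 + v) has_derivative (\<lambda>h. h *\<^sub>R axis i 1)) (at x)"
    by (auto intro!: derivative_eq_intros)
  from has_derivative_compose[OF this has_derivative_grad[OF assms]]
  have "((\<lambda>t. H (t *\<^sub>R axis i 1 + v)) has_derivative (\<lambda>h. h * partial_i i H (x *\<^sub>R axis i 1 + v))) (at x)"
    by simp
  then show ?thesis
    unfolding has_field_derivative_def by (simp add: mult.commute[of _ "partial_i i H _"])
qed

lemma axis_difference_quotient_le:
  fixes H :: "real^'n::finite \<Rightarrow> real"
  assumes "\<And>v. H differentiable (at v)" "\<And>x. \<bar>partial_i i H x\<bar> \<le> B" "t > 0"
  shows "\<bar>(H (t *\<^sub>R axis i 1 + v) - H v) / t\<bar> \<le> B"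
proof -
  obtain z where "H (t *\<^sub>R axis i 1 + v) - H (0 *\<^sub>R axis i 1 + v) = (t - 0) * partial_i i H (z *\<^sub>R axis i 1 + v)"
    using MVT2[OF assms(3), of "\<lambda>x. H (x *\<^sub>R axis i 1 + v)" "\<lambda>x. partial_i i H (x *\<^sub>R axis i 1 + v)"]
      has_real_derivative_along_axis[OF assms(1)]
    by blast
  then show ?thesis using assms(2,3) by simp
qed

lemma bounded_continuous_compact_support:
  fixes h :: "real^'n::finite \<Rightarrow> real"
  assumes "continuous_on UNIV h" "compact K" "\<And>v. v \<notin> K \<Longrightarrow> h v = 0"
  obtains B where "\<And>x. \<bar>h x\<bar> \<le> B"
proof -
  obtain B where "B > 0" and B: "\<And>x. x \<in> K \<Longrightarrow> norm (h x) \<le> B"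
    using compact_imp_bounded[OF compact_continuous_image[OF continuous_on_subset[OF assms(1)] assms(2)]]
    unfolding bounded_pos by blast
  then have "\<bar>h x\<bar> \<le> B" for x
    using assms(3)[of x] by (cases "x \<in> K") auto
  then show ?thesis by (rule that)
qed

lemma axis_difference_quotient_tendsto:
  fixes H :: "real^'n::finite \<Rightarrow> real"
  assumes "\<And>v. H differentiable (at v)" and "filterlim t (at 0) sequentially"
  shows "(\<lambda>n. (H (t n *\<^sub>R axis i 1 + v) - H v) / t n) \<longlonglongrightarrow> partial_i i H v"
proof -
  have "((\<lambda>h. (H (h *\<^sub>R axis i 1 + v) - H v) / h) \<longlongrightarrow> partial_i i H v) (at 0)"
    using has_real_derivative_along_axis[OF assms(1), of i v 0]
    unfolding has_field_derivative_iff by simp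
  then show ?thesis using assms(2) by (rule filterlim_compose)
qed

lemma integral_difference_quotient_eq_0:
  fixes H :: "'a::euclidean_space \<Rightarrow> real"
  assumes "H \<in> borel_measurable borel" "integrable lborel H"
  shows "(\<integral>v. (H (c + v) - H v) / t \<partial>lborel) = 0"
  using assms lborel_integral_translate[OF assms(1)] by simp

lemma filterlim_inverse_Suc_at_0: "filterlim (\<lambda>n. 1 / real (Suc n)) (at 0) sequentially"
proof -
  have "(\<lambda>n. 1 / real (Suc n)) \<longlonglongrightarrow> 0"
    using LIMSEQ_inverse_real_of_nat by (simp add: inverse_eq_divide)
  then show ?thesis by (simp add: filterlim_at)
qed

text \<open>Difference quotients along \<open>e\<^sub>i\<close> have integral zero by translation invariance of
  Lebesgue measure; they converge to \<open>\<partial>\<^sub>i H\<close> and, by the mean value theorem, are dominated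
  by a multiple of the indicator of the closed unit neighbourhood of the support.\<close>

lemma integral_partial_i_compact_support:
  fixes H :: "real^'n::finite \<Rightarrow> real"
  assumes H_diff: "\<And>v. H differentiable (at v)" and dH_cont: "continuous_on UNIV (partial_i i H)"
    and K: "compact K" and H_supp: "\<And>v. v \<notin> K \<Longrightarrow> H v = 0"
  shows "(\<integral>v. partial_i i H v \<partial>lborel) = 0"
proof -
  define e :: "real^'n" where "e = axis i 1"
  define K1 where "K1 = {x + y | x y. x \<in> K \<and> y \<in> cball (0::real^'n) 1}"
  have "compact K1" unfolding K1_def by (intro compact_sums K compact_cball)
  have near_K: "x + y \<in> K1" if "x \<in> K" "norm y \<le> 1" for x y
    unfolding K1_def using that by force
  obtain B where B: "\<And>x. \<bar>partial_i i H x\<bar> \<le> B"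
    using bounded_continuous_compact_support[OF dH_cont K
        partial_i_eq_0_outside[OF compact_imp_closed[OF K] H_supp]] by blast
  have H_cont: "continuous_on UNIV H"
    using H_diff by (rule continuous_on_UNIV_differentiable)
  then have H_meas: "H \<in> borel_measurable borel"
    by (rule borel_measurable_continuous_onI)
  have H_int: "integrable lborel H"
    by (rule integrable_continuous_compact_support[OF H_cont K H_supp])
  define t :: "nat \<Rightarrow> real" where "t n = 1 / Suc n" for n
  have t: "0 < t n" "t n \<le> 1" for n unfolding t_def by (auto simp: field_simps)
  define q where "q n v = (H (t n *\<^sub>R e + v) - H v) / t n" for n v
  have q_bound: "norm (q n v) \<le> B * indicator K1 v" for n v
  proof (cases "v \<in> K1")
    case True
    then show ?thesis
      using axis_difference_quotient_le[OF H_diff B t(1)] unfolding q_def e_def by simp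
  next
    case False
    have "v \<notin> K" using near_K[of v 0] False by auto
    moreover have "t n *\<^sub>R e + v \<notin> K"
    proof
      assume "t n *\<^sub>R e + v \<in> K"
      moreover have "norm (- (t n *\<^sub>R e)) \<le> 1" using t[of n] by (simp add: e_def)
      ultimately have "v \<in> K1" using near_K by fastforce
      with False show False ..
    qed
    ultimately show ?thesis unfolding q_def using False H_supp by simp
  qed
  have "(\<lambda>n. \<integral>v. q n v \<partial>lborel) \<longlonglongrightarrow> (\<integral>v. partial_i i H v \<partial>lborel)"
  proof (rule integral_dominated_convergence[where w="\<lambda>v. B * indicator K1 v"])
    show "partial_i i H \<in> borel_measurable lborel"
      using dH_cont by (simp add: borel_measurable_continuous_onI)
    show "q n \<in> borel_measurable lborel" for n
      unfolding q_def[abs_def] using H_meas by measurable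
    show "integrable lborel (\<lambda>v. B * indicator K1 v)"
      using \<open>compact K1\<close> by (auto intro!: integrable_mult_right emeasure_compact_finite borel_compact)
    show "AE v in lborel. (\<lambda>n. q n v) \<longlonglongrightarrow> partial_i i H v"
      using axis_difference_quotient_tendsto[OF H_diff filterlim_inverse_Suc_at_0]
      unfolding q_def e_def t_def by simp
    show "AE v in lborel. norm (q n v) \<le> B * indicator K1 v" for n using q_bound by simp
  qed
  moreover have "(\<integral>v. q n v \<partial>lborel) = 0" for n
    unfolding q_def by (rule integral_difference_quotient_eq_0[OF H_meas H_int])
  ultimately show ?thesis using LIMSEQ_unique by (simp add: LIMSEQ_const_iff)
qed

lemma integration_by_parts_partial_i:
  fixes h1 h2 :: "real^'n::finite \<Rightarrow> real"
  assumes h1_diff: "\<And>v. h1 differentiable (at v)" and h2_diff: "\<And>v. h2 differentiable (at v)"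
    and dh1_cont: "continuous_on UNIV (partial_i i h1)" and dh2_cont: "continuous_on UNIV (partial_i i h2)"
    and K: "compact K" and h2_supp: "\<And>v. v \<notin> K \<Longrightarrow> h2 v = 0"
  shows "integrable lborel (\<lambda>v. partial_i i h1 v * h2 v)"
    and "integrable lborel (\<lambda>v. h1 v * partial_i i h2 v)"
    and "(\<integral>v. partial_i i h1 v * h2 v \<partial>lborel) = - (\<integral>v. h1 v * partial_i i h2 v \<partial>lborel)"
proof -
  have h1_cont: "continuous_on UNIV h1" and h2_cont: "continuous_on UNIV h2"
    using h1_diff h2_diff continuous_on_UNIV_differentiable by blast+
  have dh2_supp: "partial_i i h2 v = 0" if "v \<notin> K" for v
    by (rule partial_i_eq_0_outside[OF compact_imp_closed[OF K] h2_supp that])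
  have d_prod: "partial_i i (\<lambda>v. h1 v * h2 v) = (\<lambda>v. partial_i i h1 v * h2 v + h1 v * partial_i i h2 v)"
    using partial_i_mult[OF h1_diff h2_diff] by auto
  show int1: "integrable lborel (\<lambda>v. partial_i i h1 v * h2 v)"
    by (rule integrable_continuous_compact_support[OF _ K])
      (auto intro!: continuous_intros dh1_cont h2_cont simp: h2_supp)
  show int2: "integrable lborel (\<lambda>v. h1 v * partial_i i h2 v)"
    by (rule integrable_continuous_compact_support[OF _ K])
      (auto intro!: continuous_intros h1_cont dh2_cont simp: dh2_supp)
  have "(\<integral>v. partial_i i (\<lambda>v. h1 v * h2 v) v \<partial>lborel) = 0"
    by (rule integral_partial_i_compact_support[OF _ _ K])
      (use h1_diff h2_diff h2_supp in \<open>auto simp: d_prod intro!: continuous_intros dh1_cont dh2_cont h1_cont h2_cont\<close>)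
  then show "(\<integral>v. partial_i i h1 v * h2 v \<partial>lborel) = - (\<integral>v. h1 v * partial_i i h2 v \<partial>lborel)"
    unfolding d_prod using int1 int2 by simp
qed

lemma integral_divg_mult:
  fixes F :: "real^'n::finite \<Rightarrow> real^'n" and \<psi> :: "real^'n \<Rightarrow> real"
  assumes F_diff: "\<And>i v. (\<lambda>w. F w $ i) differentiable (at v)"
    and dF_cont: "\<And>i. continuous_on UNIV (partial_i i (\<lambda>w. F w $ i))"
    and \<psi>_diff: "\<And>v. \<psi> differentiable (at v)" and d\<psi>_cont: "\<And>i. continuous_on UNIV (partial_i i \<psi>)"
    and K: "compact K" and \<psi>_supp: "\<And>v. v \<notin> K \<Longrightarrow> \<psi> v = 0"
  shows "integrable lborel (\<lambda>v. divg F v * \<psi> v)"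
    and "integrable lborel (\<lambda>v. F v \<bullet> grad \<psi> v)"
    and "(\<integral>v. divg F v * \<psi> v \<partial>lborel) = - (\<integral>v. F v \<bullet> grad \<psi> v \<partial>lborel)"
proof -
  note ibp = integration_by_parts_partial_i[OF F_diff \<psi>_diff dF_cont d\<psi>_cont K \<psi>_supp]
  have div_eq: "divg F v * \<psi> v = (\<Sum>i\<in>UNIV. partial_i i (\<lambda>w. F w $ i) v * \<psi> v)" for v
    by (simp add: divg_def sum_distrib_right)
  have inner_eq: "F v \<bullet> grad \<psi> v = (\<Sum>i\<in>UNIV. F v $ i * partial_i i \<psi> v)" for v
    by (simp add: inner_vec_def grad_def)
  show "integrable lborel (\<lambda>v. divg F v * \<psi> v)"
    unfolding div_eq using ibp(1) by (rule Bochner_Integration.integrable_sum)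
  show "integrable lborel (\<lambda>v. F v \<bullet> grad \<psi> v)"
    unfolding inner_eq using ibp(2) by (rule Bochner_Integration.integrable_sum)
  show "(\<integral>v. divg F v * \<psi> v \<partial>lborel) = - (\<integral>v. F v \<bullet> grad \<psi> v \<partial>lborel)"
    unfolding div_eq inner_eq using ibp
    by (simp add: Bochner_Integration.integral_sum sum_negf)
qed

section \<open>The projection \<open>P_\<Omega>\<close> and the mean direction\<close>

lemma outer_nth: "outer a b $ i = a $ i *\<^sub>R (b::real^'n::finite)"
  by (simp add: outer_def vec_eq_iff)

lemma outer_mult_vector: "outer a b *v x = (b \<bullet> x) *\<^sub>R (a::real^'n::finite)"
  by (simp add: vec_eq_iff outer_def matrix_vector_mult_def inner_vec_def sum_distrib_left ac_simps)

lemma norm_outer: "norm (outer a b) = norm a * norm (b::real^'n::finite)"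
proof -
  have "norm (outer a b) = L2_set (\<lambda>i. norm b * \<bar>a $ i\<bar>) UNIV"
    unfolding norm_vec_def[of "outer a b"] by (simp add: outer_nth mult.commute)
  also have "\<dots> = norm b * norm a"
    by (simp add: L2_set_right_distrib norm_vec_def[of a])
  finally show ?thesis by simp
qed

lemma projP_mult: "projP \<Omega> *v x = x - (\<Omega> \<bullet> x) *\<^sub>R (\<Omega>::real^'n::finite)"
  unfolding projP_def
  by (simp only: matrix_vector_mult_diff_rdistrib outer_mult_vector matrix_vector_mul_lid)

lemma inner_projP_commute: "(projP \<Omega> *v x) \<bullet> y = x \<bullet> (projP \<Omega> *v (y::real^'n::finite))"
  by (simp add: projP_mult inner_diff_left inner_diff_right inner_commute)

lemma projP_self: "norm \<Omega> = 1 \<Longrightarrow> projP \<Omega> *v \<Omega> = (0::real^'n::finite)"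
  by (simp add: projP_mult power2_norm_eq_inner[symmetric])

lemma norm_projP_le:
  assumes "norm \<Omega> = 1"
  shows "norm (projP \<Omega> *v x) \<le> norm (x::real^'n::finite)"
proof -
  have "\<Omega> \<bullet> \<Omega> = 1" using assms by (simp add: norm_eq_1)
  then have "(projP \<Omega> *v x) \<bullet> (projP \<Omega> *v x) = x \<bullet> x - (\<Omega> \<bullet> x)\<^sup>2"
    by (simp add: projP_mult inner_diff_left inner_diff_right inner_commute power2_eq_square)
  then show ?thesis by (simp add: norm_le)
qed

lemma has_derivative_sgn_line:
  fixes J d :: "real^'n::finite"
  assumes "J \<noteq> 0"
  shows "((\<lambda>s::real. sgn (J + s *\<^sub>R d)) has_derivative
           (\<lambda>h. h *\<^sub>R (projP (sgn J) *v d /\<^sub>R norm J))) (at 0)"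
proof -
  have line: "((\<lambda>s::real. J + s *\<^sub>R d) has_derivative (\<lambda>h. h *\<^sub>R d)) (at 0)"
    by (auto intro!: derivative_eq_intros)
  have "(norm has_derivative (\<lambda>h. h \<bullet> sgn J)) (at ((\<lambda>s::real. J + s *\<^sub>R d) 0))"
    using has_derivative_norm[OF assms] by simp
  from has_derivative_compose[OF line this]
  have "((\<lambda>s::real. norm (J + s *\<^sub>R d)) has_derivative (\<lambda>h. sgn J \<bullet> (h *\<^sub>R d))) (at 0)"
    by (simp add: inner_commute)
  from has_derivative_scaleR[OF Deriv.has_derivative_inverse[OF _ this] line]
  have "((\<lambda>s::real. inverse (norm (J + s *\<^sub>R d)) *\<^sub>R (J + s *\<^sub>R d)) has_derivative
          (\<lambda>h. h *\<^sub>R ((1 / norm J) *\<^sub>R d - ((sgn J \<bullet> d) / (norm J)\<^sup>2) *\<^sub>R J))) (at 0)"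
    using assms by (simp add: algebra_simps field_simps power2_eq_square)
  moreover have "(1 / norm J) *\<^sub>R d - ((sgn J \<bullet> d) / (norm J)\<^sup>2) *\<^sub>R J = projP (sgn J) *v d /\<^sub>R norm J"
    using assms by (simp add: projP_mult sgn_div_norm algebra_simps power2_eq_square divide_inverse)
  ultimately show ?thesis by (simp add: sgn_div_norm divide_inverse_commute)
qed

lemma Omega_of_eq_sgn: "Omega_of f = sgn (\<integral>v. f v *\<^sub>R v \<partial>lborel)"
  unfolding Omega_of_def Let_def by (simp add: sgn_div_norm)

lemma Omega_of_scale:
  assumes "c > 0"
  shows "Omega_of (\<lambda>v. c * f v) = Omega_of f"
proof -
  have "(\<integral>v. (c * f v) *\<^sub>R v \<partial>lborel) = c *\<^sub>R (\<integral>v. f v *\<^sub>R v \<partial>lborel)"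
    by (simp flip: integral_scaleR_right)
  then show ?thesis using assms by (simp add: Omega_of_eq_sgn sgn_scaleR)
qed

lemma Omega_of_line_has_derivative:
  assumes f_int: "integrable lborel (\<lambda>v. f v *\<^sub>R v)" and g_int: "integrable lborel (\<lambda>v. g v *\<^sub>R v)"
    and J_nz: "(\<integral>v. f v *\<^sub>R v \<partial>lborel) \<noteq> 0"
  shows "((\<lambda>s. Omega_of (\<lambda>w. f w + s * g w)) has_derivative
          (\<lambda>h. h *\<^sub>R (projP (Omega_of f) *v (\<integral>v. g v *\<^sub>R v \<partial>lborel) /\<^sub>R norm (\<integral>v. f v *\<^sub>R v \<partial>lborel)))) (at 0)"
proof -
  have "(\<integral>w. (f w + s * g w) *\<^sub>R w \<partial>lborel) = (\<integral>w. f w *\<^sub>R w + s *\<^sub>R (g w *\<^sub>R w) \<partial>lborel)" for s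
    by (simp add: scaleR_add_left)
  also have "\<dots> s = (\<integral>v. f v *\<^sub>R v \<partial>lborel) + s *\<^sub>R (\<integral>v. g v *\<^sub>R v \<partial>lborel)" for s
    using f_int g_int
    by (simp only: Bochner_Integration.integral_add integrable_scaleR_right integral_scaleR_right)
  finally have J_line: "(\<integral>w. (f w + s * g w) *\<^sub>R w \<partial>lborel) = (\<integral>v. f v *\<^sub>R v \<partial>lborel) + s *\<^sub>R (\<integral>v. g v *\<^sub>R v \<partial>lborel)" for s .
  show ?thesis
    unfolding Omega_of_eq_sgn J_line by (rule has_derivative_sgn_line[OF J_nz])
qed

section \<open>The equilibrium \<open>M_\<Omega>\<close>\<close>

lemma norm_le_square_plus_one: "norm x \<le> (norm x)\<^sup>2 + 1"
proof -
  have "norm x \<le> 2 * norm x" by simp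
  also have "\<dots> \<le> (norm x)\<^sup>2 + 1"
    using zero_le_power2[of "norm x - 1"] by (simp add: power2_eq_square algebra_simps)
  finally show ?thesis .
qed

locale gibbs_equilibrium =
  fixes V :: "real \<Rightarrow> real" and \<sigma> :: real and \<Omega> :: "real^'n::finite"
  assumes sigma_pos: "\<sigma> > 0"
    and V_C2: "C2 (\<lambda>v::real^'n. V (norm v))"
    and Omega_unit: "norm \<Omega> = 1"
    and Z_integrable: "integrable lborel (\<lambda>v. exp (- Phi V \<Omega> v / \<sigma>))"
    and second_moment: "integrable lborel (\<lambda>v. (norm v)\<^sup>2 * Mx V \<sigma> \<Omega> v)"
    and Omega_M: "Omega_of (Mx V \<sigma> \<Omega>) = \<Omega>"
begin

abbreviation M :: "real^'n \<Rightarrow> real" where "M \<equiv> Mx V \<sigma> \<Omega>"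

abbreviation Vr :: "real^'n \<Rightarrow> real" where "Vr \<equiv> \<lambda>u. V (norm u)"

lemmas Vr_differentiable = C2D(1)[OF V_C2]
  and partial_Vr_differentiable = C2D(2)[OF V_C2]
  and continuous_partial_partial_Vr = C2D(3)[OF V_C2]

lemma Zc_pos: "Zc V \<sigma> \<Omega> > 0"
proof -
  have "Zc V \<sigma> \<Omega> \<noteq> 0"
  proof
    \<comment> \<open>otherwise \<open>M\<close> would vanish identically (\<open>x / 0 = 0\<close>) and have no mean direction\<close>
    assume "Zc V \<sigma> \<Omega> = 0"
    then have "Omega_of M = 0" by (simp add: Mx_def Omega_of_def)
    then show False using Omega_M Omega_unit by simp
  qed
  moreover have "Zc V \<sigma> \<Omega> \<ge> 0"
    unfolding Zc_def by (rule Bochner_Integration.integral_nonneg) simp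
  ultimately show ?thesis by simp
qed

lemma M_pos: "M v > 0"
  using Zc_pos by (simp add: Mx_def)

lemma Phi_has_derivative:
  "(Phi V \<Omega> has_derivative (\<lambda>d. (v - \<Omega>) \<bullet> d + grad Vr v \<bullet> d)) (at v)"
proof -
  have "((\<lambda>w. ((w - \<Omega>) \<bullet> (w - \<Omega>)) / 2 + Vr w) has_derivative
         (\<lambda>d. ((v - \<Omega>) \<bullet> d + d \<bullet> (v - \<Omega>)) / 2 + grad Vr v \<bullet> d)) (at v)"
    by (auto intro!: derivative_eq_intros has_derivative_grad Vr_differentiable)
  then show ?thesis
    by (simp add: Phi_def[abs_def] power2_norm_eq_inner inner_commute)
qed

lemma Phi_differentiable: "Phi V \<Omega> differentiable (at v)"
  using Phi_has_derivative differentiableI by blast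

lemma partial_i_Phi: "partial_i i (Phi V \<Omega>) = (\<lambda>w. (w $ i - \<Omega> $ i) + partial_i i Vr w)"
  by (rule ext, rule partial_i_eqI[OF Phi_has_derivative]) (simp add: inner_axis grad_def)

lemma partial_i_Phi_differentiable: "partial_i i (Phi V \<Omega>) differentiable (at v)"
  unfolding partial_i_Phi
  by (intro differentiable_add differentiable_diff differentiable_vec_nth partial_Vr_differentiable) simp

lemma partial_i_partial_i_Phi:
  "partial_i i (partial_i i (Phi V \<Omega>)) v = 1 + partial_i i (partial_i i Vr) v"
proof -
  have "((\<lambda>w. (w $ i - \<Omega> $ i) + partial_i i Vr w) has_derivative
         (\<lambda>d. d $ i + grad (partial_i i Vr) v \<bullet> d)) (at v)"
    by (auto intro!: derivative_eq_intros has_derivative_vec_nth has_derivative_grad partial_Vr_differentiable)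
  then show ?thesis unfolding partial_i_Phi by (rule partial_i_eqI) simp
qed

lemma continuous_partial_i_partial_i_Phi: "continuous_on UNIV (partial_i i (partial_i i (Phi V \<Omega>)))"
  unfolding partial_i_partial_i_Phi[abs_def]
  by (intro continuous_intros continuous_partial_partial_Vr)

lemma M_has_derivative: "(M has_derivative (\<lambda>d. - M v / \<sigma> * (grad (Phi V \<Omega>) v \<bullet> d))) (at v)"
proof -
  have "((\<lambda>w. exp (- Phi V \<Omega> w / \<sigma>) / Zc V \<sigma> \<Omega>) has_derivative
        (\<lambda>d. exp (- Phi V \<Omega> v / \<sigma>) * (- (grad (Phi V \<Omega>) v \<bullet> d) / \<sigma>) / Zc V \<sigma> \<Omega>)) (at v)"
    using sigma_pos Zc_pos
    by (auto intro!: derivative_eq_intros has_derivative_grad Phi_differentiable)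
  then show ?thesis by (simp add: Mx_def[abs_def] ac_simps)
qed

lemma M_differentiable: "M differentiable (at v)"
  using M_has_derivative differentiableI by blast

lemma partial_i_M: "partial_i i M = (\<lambda>w. - M w / \<sigma> * partial_i i (Phi V \<Omega>) w)"
  by (rule ext, rule partial_i_eqI[OF M_has_derivative]) simp

lemma grad_M: "grad M v = - (M v / \<sigma>) *\<^sub>R grad (Phi V \<Omega>) v"
  by (simp add: vec_eq_iff grad_def partial_i_M)

lemma partial_i_M_differentiable: "partial_i i M differentiable (at v)"
  unfolding partial_i_M
  by (intro differentiable_divide differentiable_mult differentiable_minus M_differentiable
      partial_i_Phi_differentiable) (use sigma_pos in auto)

lemma continuous_M: "continuous_on UNIV M"
  using M_differentiable continuous_on_UNIV_differentiable by blast

lemma M_measurable: "M \<in> borel_measurable lborel"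
  using continuous_M by (simp add: borel_measurable_continuous_onI)

lemma continuous_partial_i_M: "continuous_on UNIV (partial_i i M)"
  using partial_i_M_differentiable continuous_on_UNIV_differentiable by blast

lemma M_integrable: "integrable lborel M"
  unfolding Mx_def by (intro integrable_divide_zero Z_integrable)

lemma integrable_bounded_by_second_moment:
  fixes h :: "real^'n \<Rightarrow> 'b::{banach, second_countable_topology}"
  assumes "h \<in> borel_measurable lborel" "\<And>v. norm (h v) \<le> M v * (a * (norm v)\<^sup>2 + b)"
  shows "integrable lborel h"
proof (rule Bochner_Integration.integrable_bound)
  show "integrable lborel (\<lambda>v. a * ((norm v)\<^sup>2 * M v) + b * M v)"
    using second_moment M_integrable by auto
  show "AE v in lborel. norm (h v) \<le> norm (a * ((norm v)\<^sup>2 * M v) + b * M v)"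
  proof (rule AE_I2)
    fix v
    have "M v * (a * (norm v)\<^sup>2 + b) \<le> norm (a * ((norm v)\<^sup>2 * M v) + b * M v)"
      by (simp add: algebra_simps)
    then show "norm (h v) \<le> norm (a * ((norm v)\<^sup>2 * M v) + b * M v)"
      using assms(2)[of v] by linarith
  qed
qed (use assms(1) in simp)

lemma integrable_M_velocity: "integrable lborel (\<lambda>v. M v *\<^sub>R v)"
proof (rule integrable_bounded_by_second_moment[where a=1 and b=1])
  show "(\<lambda>v. M v *\<^sub>R v) \<in> borel_measurable lborel"
    using M_measurable by measurable
  show "norm (M v *\<^sub>R v) \<le> M v * (1 * (norm v)\<^sup>2 + 1)" for v
    using M_pos[of v] norm_le_square_plus_one[of v] by (simp add: mult_left_mono)
qed

lemma integral_M_velocity: "(\<integral>v. M v *\<^sub>R v \<partial>lborel) = c1 V \<sigma> \<Omega> *\<^sub>R \<Omega>"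
  and c1_pos: "c1 V \<sigma> \<Omega> > 0"
proof -
  define J where "J = (\<integral>v. M v *\<^sub>R v \<partial>lborel)"
  have sgn_J: "sgn J = \<Omega>" using Omega_M by (simp add: Omega_of_eq_sgn J_def)
  then have "J \<noteq> 0" using Omega_unit by auto
  have "c1 V \<sigma> \<Omega> = (\<integral>v. (M v *\<^sub>R v) \<bullet> \<Omega> \<partial>lborel)"
    unfolding c1_def by (rule Bochner_Integration.integral_cong) (auto simp: mult.commute)
  also have "\<dots> = J \<bullet> sgn J"
    unfolding sgn_J unfolding J_def by (rule integral_inner_left) (use integrable_M_velocity in auto)
  also have "\<dots> = norm J" using \<open>J \<noteq> 0\<close> by (simp add: sgn_div_norm power2_norm_eq_inner[symmetric] power2_eq_square divide_inverse)
  finally have c1_J: "c1 V \<sigma> \<Omega> = norm J" .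
  have "J = norm J *\<^sub>R sgn J" using \<open>J \<noteq> 0\<close> by (simp add: sgn_div_norm)
  then show "(\<integral>v. M v *\<^sub>R v \<partial>lborel) = c1 V \<sigma> \<Omega> *\<^sub>R \<Omega>"
    unfolding J_def[symmetric] c1_J sgn_J .
  show "c1 V \<sigma> \<Omega> > 0" using c1_J \<open>J \<noteq> 0\<close> by simp
qed

lemma integral_scaled_M_velocity:
  "(\<integral>v. (\<rho> * M v) *\<^sub>R v \<partial>lborel) = (\<rho> * c1 V \<sigma> \<Omega>) *\<^sub>R \<Omega>"
proof -
  have "(\<integral>v. (\<rho> * M v) *\<^sub>R v \<partial>lborel) = (\<integral>v. \<rho> *\<^sub>R (M v *\<^sub>R v) \<partial>lborel)" by simp
  also have "\<dots> = \<rho> *\<^sub>R (\<integral>v. M v *\<^sub>R v \<partial>lborel)" by (rule integral_scaleR_right)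
  finally show ?thesis by (simp add: integral_M_velocity)
qed

lemma Omega_of_scaled_M: "\<rho> > 0 \<Longrightarrow> Omega_of (\<lambda>w. \<rho> * M w) = \<Omega>"
  unfolding Omega_of_scale[of \<rho> M] by (rule Omega_M)

lemma Omega_of_perturbation_has_derivative:
  assumes rho_pos: "\<rho> > 0" and g_int: "integrable lborel (\<lambda>v. g v *\<^sub>R v)"
  shows "((\<lambda>s. Omega_of (\<lambda>w. \<rho> * M w + s * g w) $ i) has_real_derivative
           (projP \<Omega> *v (\<integral>u. g u *\<^sub>R u \<partial>lborel)) $ i / (\<rho> * c1 V \<sigma> \<Omega>)) (at 0)"
proof -
  have "integrable lborel (\<lambda>v. (\<rho> * M v) *\<^sub>R v)"
    using integrable_scaleR_right[OF integrable_M_velocity, of \<rho>] by simp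
  then have "((\<lambda>s. Omega_of (\<lambda>w. \<rho> * M w + s * g w)) has_derivative
      (\<lambda>h. h *\<^sub>R ((projP \<Omega> *v (\<integral>u. g u *\<^sub>R u \<partial>lborel)) /\<^sub>R (\<rho> * c1 V \<sigma> \<Omega>)))) (at 0)"
    using Omega_of_line_has_derivative[OF _ g_int, of "\<lambda>w. \<rho> * M w"] Omega_of_scaled_M[OF rho_pos]
      rho_pos c1_pos Omega_unit norm_eq_zero[of \<Omega>]
    by (simp add: integral_scaled_M_velocity)
  from bounded_linear.has_derivative[OF bounded_linear_vec_nth this, of i]
  show ?thesis by (rule has_derivative_imp_has_field_derivative) (simp add: field_simps)
qed

section \<open>The linearisation\<close>

lemma Qop_eq_sum:
  fixes u :: "real^'n \<Rightarrow> real"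
  assumes u_diff: "\<And>w. u differentiable (at w)" and du_diff: "\<And>i w. partial_i i u differentiable (at w)"
  shows "Qop V \<sigma> u v = (\<Sum>i\<in>UNIV. \<sigma> * partial_i i (partial_i i u) v
      + partial_i i u v * (v $ i - Omega_of u $ i) + u v
      + partial_i i u v * partial_i i Vr v + u v * partial_i i (partial_i i Vr) v)"
  unfolding Qop_def divg_def
proof (rule sum.cong[OF refl])
  fix i
  have "(\<lambda>w. (\<sigma> *\<^sub>R grad u w + u w *\<^sub>R (w - Omega_of u) + u w *\<^sub>R grad Vr w) $ i)
      = (\<lambda>w. \<sigma> * partial_i i u w + u w * (w $ i - Omega_of u $ i) + u w * partial_i i Vr w)"
    by (simp add: grad_def algebra_simps)
  then show "partial_i i (\<lambda>w. (\<sigma> *\<^sub>R grad u w + u w *\<^sub>R (w - Omega_of u) + u w *\<^sub>R grad Vr w) $ i) v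
     = \<sigma> * partial_i i (partial_i i u) v + partial_i i u v * (v $ i - Omega_of u $ i) + u v
      + partial_i i u v * partial_i i Vr v + u v * partial_i i (partial_i i Vr) v"
    by simp (rule partial_i_eqI, (rule derivative_eq_intros has_derivative_grad u_diff du_diff
        Vr_differentiable partial_Vr_differentiable has_derivative_vec_nth refl)+, simp add: algebra_simps)
qed

text \<open>\<open>L_{\<rho> M} g = div (flux g)\<close> (\<open>Lin_eq_divg_flux\<close>); the factor \<open>\<rho>\<close> of
  \<open>\<integral> (v \<cdot> \<Omega>) \<rho> M = \<rho> c\<^sub>1\<close> has already cancelled against the one in \<open>f = \<rho> M\<close>.\<close>

definition flux :: "(real^'n \<Rightarrow> real) \<Rightarrow> real^'n \<Rightarrow> real^'n" where
  "flux g w = \<sigma> *\<^sub>R grad g w + g w *\<^sub>R grad (Phi V \<Omega>) w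
     - (M w / c1 V \<sigma> \<Omega>) *\<^sub>R (projP \<Omega> *v (\<integral>u. g u *\<^sub>R u \<partial>lborel))"

lemma flux_nth:
  "flux g w $ i = \<sigma> * partial_i i g w + g w * partial_i i (Phi V \<Omega>) w
     - M w * ((projP \<Omega> *v (\<integral>u. g u *\<^sub>R u \<partial>lborel)) $ i / c1 V \<sigma> \<Omega>)"
  by (simp add: flux_def grad_def)

context
  fixes g :: "real^'n \<Rightarrow> real"
  assumes g_diff: "\<And>w. g differentiable (at w)"
    and dg_diff: "\<And>i w. partial_i i g differentiable (at w)"
begin

lemma flux_differentiable: "(\<lambda>w. flux g w $ i) differentiable (at v)"
  unfolding flux_nth
  by (intro derivative_intros g_diff dg_diff M_differentiable partial_i_Phi_differentiable)

lemma partial_i_flux: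
  "partial_i i (\<lambda>w. flux g w $ i) v =
     \<sigma> * partial_i i (partial_i i g) v + partial_i i g v * partial_i i (Phi V \<Omega>) v
     + g v * partial_i i (partial_i i (Phi V \<Omega>)) v
     - partial_i i M v * ((projP \<Omega> *v (\<integral>u. g u *\<^sub>R u \<partial>lborel)) $ i / c1 V \<sigma> \<Omega>)"
  unfolding flux_nth
  by (rule partial_i_eqI, (rule derivative_eq_intros has_derivative_grad g_diff dg_diff
      M_differentiable partial_i_Phi_differentiable refl)+) (simp add: algebra_simps)

lemma Qop_perturbation_eq_sum:
  "Qop V \<sigma> (\<lambda>w. \<rho> * M w + s * g w) v = (\<Sum>i\<in>UNIV.
      \<sigma> * (\<rho> * partial_i i (partial_i i M) v + s * partial_i i (partial_i i g) v)
      + (\<rho> * partial_i i M v + s * partial_i i g v) * (v $ i - Omega_of (\<lambda>w. \<rho> * M w + s * g w) $ i)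
      + (\<rho> * M v + s * g v)
      + (\<rho> * partial_i i M v + s * partial_i i g v) * partial_i i Vr v
      + (\<rho> * M v + s * g v) * partial_i i (partial_i i Vr) v)"
proof -
  let ?u = "\<lambda>w. \<rho> * M w + s * g w"
  have du: "partial_i i ?u = (\<lambda>w. \<rho> * partial_i i M w + s * partial_i i g w)" for i
    by (rule ext, rule partial_i_eqI, (rule derivative_eq_intros has_derivative_grad g_diff
        M_differentiable refl)+) simp
  have ddu: "partial_i i (partial_i i ?u) v
      = \<rho> * partial_i i (partial_i i M) v + s * partial_i i (partial_i i g) v" for i
    unfolding du
    by (rule partial_i_eqI, (rule derivative_eq_intros has_derivative_grad dg_diff
        partial_i_M_differentiable refl)+) simp
  have "?u differentiable (at w)" for w
    by (intro derivative_intros M_differentiable g_diff)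
  moreover have "partial_i i ?u differentiable (at w)" for i w
    unfolding du by (intro derivative_intros partial_i_M_differentiable dg_diff)
  ultimately show ?thesis
    by (simp only: Qop_eq_sum ddu) (simp add: du)
qed

lemma Qop_line_has_derivative:
  assumes rho_pos: "\<rho> > 0" and g_int: "integrable lborel (\<lambda>v. g v *\<^sub>R v)"
  shows "((\<lambda>s. Qop V \<sigma> (\<lambda>w. \<rho> * M w + s * g w) v) has_real_derivative divg (flux g) v) (at 0)"
proof -
  define c where "c = projP \<Omega> *v (\<integral>u. g u *\<^sub>R u \<partial>lborel)"
  have "((\<lambda>s. Qop V \<sigma> (\<lambda>w. \<rho> * M w + s * g w) v) has_real_derivative (\<Sum>i\<in>UNIV.
      \<sigma> * partial_i i (partial_i i g) v + partial_i i g v * (v $ i - \<Omega> $ i)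
      - \<rho> * partial_i i M v * (c $ i / (\<rho> * c1 V \<sigma> \<Omega>)) + g v
      + partial_i i g v * partial_i i Vr v + g v * partial_i i (partial_i i Vr) v)) (at 0)"
    unfolding Qop_perturbation_eq_sum
    by (rule DERIV_sum, (rule derivative_eq_intros refl
        Omega_of_perturbation_has_derivative[OF rho_pos g_int, folded c_def])+)
      (simp add: Omega_of_scaled_M[OF rho_pos] algebra_simps)
  also have "(\<Sum>i\<in>UNIV.
      \<sigma> * partial_i i (partial_i i g) v + partial_i i g v * (v $ i - \<Omega> $ i)
      - \<rho> * partial_i i M v * (c $ i / (\<rho> * c1 V \<sigma> \<Omega>)) + g v
      + partial_i i g v * partial_i i Vr v + g v * partial_i i (partial_i i Vr) v) = divg (flux g) v"
    unfolding divg_def partial_i_flux partial_i_partial_i_Phi unfolding partial_i_Phi c_def[symmetric]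
    using rho_pos by (intro sum.cong refl) (simp add: algebra_simps)
  finally show ?thesis .
qed

lemma Lin_eq_divg_flux:
  assumes "\<rho> > 0" "integrable lborel (\<lambda>v. g v *\<^sub>R v)"
  shows "Lin V \<sigma> (\<lambda>w. \<rho> * M w) g v = divg (flux g) v"
  unfolding Lin_def by (rule DERIV_imp_deriv[OF Qop_line_has_derivative[OF assms]])

lemma Lin_scale_invariant:
  assumes "\<rho> > 0" "integrable lborel (\<lambda>v. g v *\<^sub>R v)"
  shows "Lin V \<sigma> (\<lambda>w. \<rho> * M w) g v = Lin V \<sigma> M g v"
  using Lin_eq_divg_flux[OF assms] Lin_eq_divg_flux[OF zero_less_one assms(2)] by simp

end

lemma continuous_partial_i_flux:
  assumes "C2 g"
  shows "continuous_on UNIV (partial_i i (\<lambda>w. flux g w $ i))"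
proof -
  have "continuous_on UNIV (partial_i i (Phi V \<Omega>))"
    using partial_i_Phi_differentiable continuous_on_UNIV_differentiable by blast
  then show ?thesis
    unfolding partial_i_flux[OF C2D(1,2)[OF assms], abs_def]
    by (intro continuous_intros C2D[OF assms] continuous_partial_i_partial_i_Phi continuous_M
        continuous_partial_i_M)
qed

lemma norm_diff_Omega_le: "norm (v - \<Omega>) \<le> norm v + 1"
  using norm_triangle_ineq4[of v \<Omega>] Omega_unit by simp

lemma integrable_pressure_integrand:
  "integrable lborel (\<lambda>v. M v *\<^sub>R outer (v - \<Omega>) (projP \<Omega> *v (v - \<Omega>)))"
proof (rule integrable_bounded_by_second_moment[where a=2 and b=2])
  have "continuous_on UNIV (\<lambda>v. projP \<Omega> *v (v - \<Omega>))"
    by (rule continuous_on_compose2[OF linear_continuous_on[OF matrix_vector_mul_bounded_linear]])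
      (auto intro: continuous_intros)
  then have "continuous_on UNIV (\<lambda>v. M v *\<^sub>R outer (v - \<Omega>) (projP \<Omega> *v (v - \<Omega>)))"
    unfolding outer_def by (intro continuous_intros continuous_on_vec_lambda continuous_M) auto
  then show "(\<lambda>v. M v *\<^sub>R outer (v - \<Omega>) (projP \<Omega> *v (v - \<Omega>))) \<in> borel_measurable lborel"
    by (simp add: borel_measurable_continuous_onI)
  fix v
  have "norm (v - \<Omega>) * norm (projP \<Omega> *v (v - \<Omega>)) \<le> (norm v + 1)\<^sup>2"
    using mult_mono[OF norm_diff_Omega_le order_trans[OF norm_projP_le[OF Omega_unit] norm_diff_Omega_le]]
    by (simp add: power2_eq_square)
  also have "\<dots> \<le> 2 * (norm v)\<^sup>2 + 2"
    using zero_le_power2[of "norm v - 1"] by (simp add: power2_eq_square algebra_simps)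
  finally show "norm (M v *\<^sub>R outer (v - \<Omega>) (projP \<Omega> *v (v - \<Omega>))) \<le> M v * (2 * (norm v)\<^sup>2 + 2)"
    using M_pos[of v] by (simp add: norm_outer mult_left_mono)
qed

lemma pressure_nth:
  "pressure V \<sigma> \<Omega> $ i = (\<integral>v. (M v * (v $ i - \<Omega> $ i)) *\<^sub>R (projP \<Omega> *v v) \<partial>lborel)"
proof -
  have "pressure V \<sigma> \<Omega> $ i = (\<integral>v. (M v *\<^sub>R outer (v - \<Omega>) (projP \<Omega> *v (v - \<Omega>))) $ i \<partial>lborel)"
    unfolding pressure_def
    by (rule integral_bounded_linear[OF bounded_linear_vec_nth integrable_pressure_integrand, symmetric])
  also have "\<dots> = (\<integral>v. (M v * (v $ i - \<Omega> $ i)) *\<^sub>R (projP \<Omega> *v v) \<partial>lborel)"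
    by (simp add: outer_nth matrix_vector_mult_diff_distrib projP_self[OF Omega_unit])
  finally show ?thesis .
qed

lemma partial_i_velocity_moment:
  "partial_i j (\<lambda>w. \<rho> * M w * (w $ i - \<Omega> $ i)) w
     = \<rho> * (w $ i - \<Omega> $ i) * partial_i j M w + \<rho> * M w * (if j = i then 1 else 0)"
  by (rule partial_i_eqI, (rule derivative_eq_intros has_derivative_vec_nth has_derivative_grad
      M_differentiable refl)+) (simp add: algebra_simps axis_one_nth)

lemma integrable_velocity_moment: "integrable lborel (\<lambda>v. (M v * (v $ i - \<Omega> $ i)) *\<^sub>R v)"
proof (rule integrable_bounded_by_second_moment[where a=2 and b=1])
  show "(\<lambda>v. (M v * (v $ i - \<Omega> $ i)) *\<^sub>R v) \<in> borel_measurable lborel"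
    using M_measurable by measurable
  fix v
  have "norm ((M v * (v $ i - \<Omega> $ i)) *\<^sub>R v) = M v * (\<bar>v $ i - \<Omega> $ i\<bar> * norm v)"
    using M_pos[of v] by (simp add: abs_mult)
  also have "\<dots> \<le> M v * ((norm v + 1) * norm v)"
    using order_trans[OF component_le_norm_cart[of "v - \<Omega>" i] norm_diff_Omega_le] M_pos[of v]
    by (intro mult_left_mono mult_right_mono) auto
  also have "\<dots> \<le> M v * (2 * (norm v)\<^sup>2 + 1)"
    using norm_le_square_plus_one[of v] M_pos[of v]
    by (intro mult_left_mono) (auto simp: power2_eq_square algebra_simps)
  finally show "norm ((M v * (v $ i - \<Omega> $ i)) *\<^sub>R v) \<le> M v * (2 * (norm v)\<^sup>2 + 1)" .
qed

lemma projP_integral_velocity_moment: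
  "projP \<Omega> *v (\<integral>v. (M v * (v $ i - \<Omega> $ i)) *\<^sub>R v \<partial>lborel) = pressure V \<sigma> \<Omega> $ i"
  unfolding pressure_nth
  by (subst integral_bounded_linear[OF matrix_vector_mul_bounded_linear integrable_velocity_moment, symmetric])
    (simp add: matrix_vector_mult_scaleR)

text \<open>Since \<open>\<nabla>M = - M \<nabla>\<Phi> / \<sigma>\<close>, the terms \<open>\<sigma> \<nabla>g + g \<nabla>\<Phi>\<close> of the flux reduce to
  \<open>\<sigma> \<rho> M e\<^sub>i\<close> for \<open>g = \<rho> M (v\<^sub>i - \<Omega>\<^sub>i)\<close>.\<close>

lemma flux_velocity_moment:
  "flux (\<lambda>w. \<rho> * M w * (w $ i - \<Omega> $ i))
     = (\<lambda>w. M w *\<^sub>R ((\<sigma> * \<rho>) *\<^sub>R axis i 1 - (\<rho> / c1 V \<sigma> \<Omega>) *\<^sub>R pressure V \<sigma> \<Omega> $ i))"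
proof -
  have "(\<integral>u. (\<rho> * M u * (u $ i - \<Omega> $ i)) *\<^sub>R u \<partial>lborel)
      = (\<integral>u. \<rho> *\<^sub>R ((M u * (u $ i - \<Omega> $ i)) *\<^sub>R u) \<partial>lborel)"
    by (simp add: mult.assoc)
  also have "\<dots> = \<rho> *\<^sub>R (\<integral>u. (M u * (u $ i - \<Omega> $ i)) *\<^sub>R u \<partial>lborel)"
    by (rule integral_scaleR_right)
  finally have "projP \<Omega> *v (\<integral>u. (\<rho> * M u * (u $ i - \<Omega> $ i)) *\<^sub>R u \<partial>lborel) = \<rho> *\<^sub>R pressure V \<sigma> \<Omega> $ i"
    by (simp add: matrix_vector_mult_scaleR projP_integral_velocity_moment)
  then show ?thesis
    unfolding fun_eq_iff vec_eq_iff flux_nth partial_i_velocity_moment using sigma_pos c1_pos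
    by (simp add: partial_i_M axis_one_nth field_simps)
qed

lemma Lin_velocity_moment:
  assumes rho_pos: "\<rho> > 0"
  shows "Lin V \<sigma> (\<lambda>w. \<rho> * M w) (\<lambda>w. \<rho> * M w * (w - \<Omega>) $ i) v
     = \<sigma> * partial_i i (\<lambda>w. \<rho> * M w) v
       - divg (\<lambda>w. (\<rho> * M w / c1 V \<sigma> \<Omega>) *\<^sub>R (pressure V \<sigma> \<Omega> $ i)) v"
proof -
  define g where "g w = \<rho> * M w * (w $ i - \<Omega> $ i)" for w
  define p where "p = pressure V \<sigma> \<Omega> $ i"
  have g_diff: "g differentiable (at w)" for w
    unfolding g_def by (intro derivative_intros M_differentiable differentiable_vec_nth)
  have dg_diff: "partial_i j g differentiable (at w)" for j w
    unfolding g_def partial_i_velocity_moment[abs_def]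
    by (intro derivative_intros M_differentiable partial_i_M_differentiable differentiable_vec_nth)
  have g_int: "integrable lborel (\<lambda>v. g v *\<^sub>R v)"
    using integrable_scaleR_right[OF integrable_velocity_moment, of \<rho> i]
    unfolding g_def by (simp add: mult.assoc)
  have "Lin V \<sigma> (\<lambda>w. \<rho> * M w) g v = grad M v \<bullet> ((\<sigma> * \<rho>) *\<^sub>R axis i 1 - (\<rho> / c1 V \<sigma> \<Omega>) *\<^sub>R p)"
    unfolding Lin_eq_divg_flux[OF g_diff dg_diff rho_pos g_int] g_def flux_velocity_moment p_def
    by (rule divg_scaleR_const[OF M_differentiable])
  moreover have "divg (\<lambda>w. (\<rho> * M w / c1 V \<sigma> \<Omega>) *\<^sub>R p) v = grad M v \<bullet> ((\<rho> / c1 V \<sigma> \<Omega>) *\<^sub>R p)"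
    using divg_scaleR_const[OF M_differentiable, where c="(\<rho> / c1 V \<sigma> \<Omega>) *\<^sub>R p"]
    by (simp add: mult.commute)
  moreover have "partial_i i (\<lambda>w. \<rho> * M w) v = \<rho> * partial_i i M v"
    by (rule partial_i_eqI, (rule derivative_eq_intros has_derivative_grad M_differentiable refl)+) simp
  moreover have "(\<lambda>w. \<rho> * M w * (w - \<Omega>) $ i) = g" by (simp add: g_def fun_eq_iff)
  ultimately show ?thesis
    unfolding p_def[symmetric] by (simp add: inner_diff_right algebra_simps)
qed

section \<open>The adjoint\<close>

definition Lin_adjoint :: "(real^'n \<Rightarrow> real) \<Rightarrow> real^'n \<Rightarrow> real" where
  "Lin_adjoint \<psi> v = \<sigma> * divg (\<lambda>w. M w *\<^sub>R grad \<psi> w) v / M v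
     + (projP \<Omega> *v v) \<bullet> ((\<integral>w. M w *\<^sub>R grad \<psi> w \<partial>lborel) /\<^sub>R c1 V \<sigma> \<Omega>)"

lemma Lin_adjoint_eq:
  assumes "\<And>i w. partial_i i \<psi> differentiable (at w)"
  shows "Lin_adjoint \<psi> v = \<sigma> * divg (grad \<psi>) v - grad (Phi V \<Omega>) v \<bullet> grad \<psi> v
     + (projP \<Omega> *v v) \<bullet> ((\<integral>w. M w *\<^sub>R grad \<psi> w \<partial>lborel) /\<^sub>R c1 V \<sigma> \<Omega>)"
proof -
  have "divg (\<lambda>w. M w *\<^sub>R grad \<psi> w) v = M v * divg (grad \<psi>) v + grad M v \<bullet> grad \<psi> v"
    by (rule divg_scaleR[OF M_differentiable]) (simp add: grad_def assms)
  then show ?thesis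
    unfolding Lin_adjoint_def using sigma_pos M_pos[of v] by (simp add: grad_M field_simps)
qed

context
  fixes g \<psi> :: "real^'n \<Rightarrow> real"
  assumes g: "C2 g" "compact_supp g" and \<psi>: "C2 \<psi>" "compact_supp \<psi>"
begin

lemma integrable_velocity_compact_support: "integrable lborel (\<lambda>v. g v *\<^sub>R v)"
proof -
  obtain K where "compact K" "\<And>v. v \<notin> K \<Longrightarrow> g v = 0"
    using compact_supportD[OF g(2)] by metis
  then show ?thesis
    by (intro integrable_continuous_compact_support) (auto intro!: continuous_intros C2D g(1))
qed

lemma integral_Lin_mult:
  assumes "\<rho> > 0"
  shows "integrable lborel (\<lambda>v. Lin V \<sigma> (\<lambda>w. \<rho> * M w) g v * \<psi> v)"
    and "integrable lborel (\<lambda>v. flux g v \<bullet> grad \<psi> v)"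
    and "(\<integral>v. Lin V \<sigma> (\<lambda>w. \<rho> * M w) g v * \<psi> v \<partial>lborel) = - (\<integral>v. flux g v \<bullet> grad \<psi> v \<partial>lborel)"
proof -
  obtain K where "compact K" "\<And>v. v \<notin> K \<Longrightarrow> \<psi> v = 0"
    using compact_supportD[OF \<psi>(2)] by metis
  from integral_divg_mult[OF flux_differentiable[OF C2D(1,2)[OF g(1)]] continuous_partial_i_flux[OF g(1)]
      C2D(1,5)[OF \<psi>(1)] this]
  show "integrable lborel (\<lambda>v. Lin V \<sigma> (\<lambda>w. \<rho> * M w) g v * \<psi> v)"
    and "integrable lborel (\<lambda>v. flux g v \<bullet> grad \<psi> v)"
    and "(\<integral>v. Lin V \<sigma> (\<lambda>w. \<rho> * M w) g v * \<psi> v \<partial>lborel) = - (\<integral>v. flux g v \<bullet> grad \<psi> v \<partial>lborel)"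
    by (simp_all add: Lin_eq_divg_flux[OF C2D(1,2)[OF g(1)] assms integrable_velocity_compact_support])
qed

lemma integral_drift_term:
  defines "c \<equiv> projP \<Omega> *v (\<integral>u. g u *\<^sub>R u \<partial>lborel)"
    and "W \<equiv> (\<integral>w. M w *\<^sub>R grad \<psi> w \<partial>lborel) /\<^sub>R c1 V \<sigma> \<Omega>"
  shows "integrable lborel (\<lambda>v. g v * ((projP \<Omega> *v v) \<bullet> W))"
    and "integrable lborel (\<lambda>v. M v / c1 V \<sigma> \<Omega> * (c \<bullet> grad \<psi> v))"
    and "(\<integral>v. g v * ((projP \<Omega> *v v) \<bullet> W) \<partial>lborel) = (\<integral>v. M v / c1 V \<sigma> \<Omega> * (c \<bullet> grad \<psi> v) \<partial>lborel)"
proof -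
  obtain Kg where Kg: "compact Kg" and g_supp: "\<And>v. v \<notin> Kg \<Longrightarrow> g v = 0"
    using compact_supportD[OF g(2)] by metis
  obtain K\<psi> where K\<psi>: "compact K\<psi>" and d\<psi>_supp: "\<And>i v. v \<notin> K\<psi> \<Longrightarrow> partial_i i \<psi> v = 0"
    using compact_supportD[OF \<psi>(2)] by metis
  have grad\<psi>_supp: "grad \<psi> v = 0" if "v \<notin> K\<psi>" for v
    using d\<psi>_supp[OF that] by (simp add: grad_def vec_eq_iff)
  have grad\<psi>_cont: "continuous_on UNIV (grad \<psi>)" by (intro continuous_on_grad C2D \<psi>(1))
  have M_grad\<psi>_int: "integrable lborel (\<lambda>w. M w *\<^sub>R grad \<psi> w)"
    by (rule integrable_continuous_compact_support[OF _ K\<psi>])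
      (auto intro!: continuous_intros continuous_M grad\<psi>_cont simp: grad\<psi>_supp)
  show "integrable lborel (\<lambda>v. g v * ((projP \<Omega> *v v) \<bullet> W))"
    by (rule integrable_continuous_compact_support[OF _ Kg],
        (intro continuous_intros C2D g(1) continuous_on_compose2[OF linear_continuous_on[OF matrix_vector_mul_bounded_linear]]; simp),
        simp add: g_supp)
  show "integrable lborel (\<lambda>v. M v / c1 V \<sigma> \<Omega> * (c \<bullet> grad \<psi> v))"
    by (rule integrable_continuous_compact_support[OF _ K\<psi>])
      (use c1_pos in \<open>auto intro!: continuous_intros continuous_M grad\<psi>_cont simp: grad\<psi>_supp\<close>)
  have "(\<integral>v. g v * ((projP \<Omega> *v v) \<bullet> W) \<partial>lborel) = (\<integral>v. (g v *\<^sub>R v) \<bullet> (projP \<Omega> *v W) \<partial>lborel)"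
    by (simp add: inner_projP_commute)
  also have "\<dots> = (\<integral>v. g v *\<^sub>R v \<partial>lborel) \<bullet> (projP \<Omega> *v W)"
    by (rule integral_inner_left) (use integrable_velocity_compact_support in auto)
  also have "\<dots> = c \<bullet> W"
    unfolding c_def by (simp add: inner_projP_commute)
  also have "\<dots> = (c \<bullet> (\<integral>w. M w *\<^sub>R grad \<psi> w \<partial>lborel)) / c1 V \<sigma> \<Omega>"
    unfolding W_def by (simp add: divide_inverse_commute)
  also have "\<dots> = (\<integral>w. c \<bullet> (M w *\<^sub>R grad \<psi> w) \<partial>lborel) / c1 V \<sigma> \<Omega>"
    by (subst integral_inner_right) (use M_grad\<psi>_int in auto)
  also have "\<dots> = (\<integral>v. M v / c1 V \<sigma> \<Omega> * (c \<bullet> grad \<psi> v) \<partial>lborel)"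
    by (simp add: ac_simps)
  finally show "(\<integral>v. g v * ((projP \<Omega> *v v) \<bullet> W) \<partial>lborel) = (\<integral>v. M v / c1 V \<sigma> \<Omega> * (c \<bullet> grad \<psi> v) \<partial>lborel)" .
qed

lemma integral_mult_Lin_adjoint:
  shows "integrable lborel (\<lambda>v. g v * Lin_adjoint \<psi> v)"
    and "(\<integral>v. g v * Lin_adjoint \<psi> v \<partial>lborel) = - (\<integral>v. flux g v \<bullet> grad \<psi> v \<partial>lborel)"
proof -
  obtain K where K: "compact K" and g_supp: "\<And>v. v \<notin> K \<Longrightarrow> g v = 0"
    using compact_supportD[OF g(2)] by metis
  define c where "c = projP \<Omega> *v (\<integral>u. g u *\<^sub>R u \<partial>lborel)"
  define W where "W = (\<integral>w. M w *\<^sub>R grad \<psi> w \<partial>lborel) /\<^sub>R c1 V \<sigma> \<Omega>"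
  define T1 where "T1 v = grad \<psi> v \<bullet> grad g v" for v
  define T2 where "T2 v = g v * (grad (Phi V \<Omega>) v \<bullet> grad \<psi> v)" for v
  define T3 where "T3 v = M v / c1 V \<sigma> \<Omega> * (c \<bullet> grad \<psi> v)" for v
  define T4 where "T4 v = g v * ((projP \<Omega> *v v) \<bullet> W)" for v
  note drift = integral_drift_term[folded c_def W_def, folded T3_def T4_def]
  have "integrable lborel (\<lambda>v. divg (grad \<psi>) v * g v)" "integrable lborel T1"
    "(\<integral>v. divg (grad \<psi>) v * g v \<partial>lborel) = - (\<integral>v. T1 v \<partial>lborel)"
    using integral_divg_mult[of "grad \<psi>", OF _ _ C2D(1,5)[OF g(1)] K g_supp, folded T1_def] C2D(2,3)[OF \<psi>(1)]
    by (simp_all add: grad_def)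
  moreover have "integrable lborel T2"
  proof -
    have "continuous_on UNIV (grad (Phi V \<Omega>))"
      using partial_i_Phi_differentiable continuous_on_UNIV_differentiable
      by (intro continuous_on_grad) blast
    moreover have "continuous_on UNIV (grad \<psi>)" by (intro continuous_on_grad C2D \<psi>(1))
    ultimately show ?thesis
      unfolding T2_def using C2D(4)[OF g(1)]
      by (intro integrable_continuous_compact_support[OF _ K]) (auto intro!: continuous_intros simp: g_supp)
  qed
  moreover have "g v * Lin_adjoint \<psi> v = \<sigma> * (divg (grad \<psi>) v * g v) - T2 v + T4 v" for v
    unfolding Lin_adjoint_eq[OF C2D(2)[OF \<psi>(1)]] T2_def T4_def W_def by (simp add: algebra_simps)
  moreover have "flux g v \<bullet> grad \<psi> v = \<sigma> * T1 v + T2 v - T3 v" for v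
    unfolding T1_def T2_def T3_def c_def flux_def by (simp add: inner_commute algebra_simps)
  ultimately show "integrable lborel (\<lambda>v. g v * Lin_adjoint \<psi> v)"
    and "(\<integral>v. g v * Lin_adjoint \<psi> v \<partial>lborel) = - (\<integral>v. flux g v \<bullet> grad \<psi> v \<partial>lborel)"
    using drift by simp_all
qed

lemma integral_Lin_mult_eq_adjoint:
  assumes "\<rho> > 0"
  shows "integrable lborel (\<lambda>v. Lin V \<sigma> (\<lambda>w. \<rho> * M w) g v * \<psi> v)"
    and "integrable lborel (\<lambda>v. g v * Lin_adjoint \<psi> v)"
    and "(\<integral>v. Lin V \<sigma> (\<lambda>w. \<rho> * M w) g v * \<psi> v \<partial>lborel) = (\<integral>v. g v * Lin_adjoint \<psi> v \<partial>lborel)"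
  using integral_Lin_mult[OF assms] integral_mult_Lin_adjoint by simp_all

end

end

theorem proposition3:
  fixes V :: "real \<Rightarrow> real" and \<sigma> \<rho> :: real and \<Omega> :: "real^'n::finite"
    and f :: "real^'n \<Rightarrow> real"
  assumes dim: "CARD('n) \<ge> 2"
    and sigma_pos: "\<sigma> > 0"
    and Z_fin: "\<forall>\<Omega>'::real^'n. norm \<Omega>' = 1 \<longrightarrow>
                  integrable lborel (\<lambda>v. exp (- Phi V \<Omega>' v / \<sigma>))"
    and second_moment: "\<forall>\<Omega>'::real^'n. norm \<Omega>' = 1 \<longrightarrow>
                  integrable lborel (\<lambda>v. (norm v)\<^sup>2 * Mx V \<sigma> \<Omega>' v)"
    and V_reg: "C2 (\<lambda>v::real^'n. V (norm v))"
    and rho_pos: "\<rho> > 0"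
    and Omega_unit: "norm \<Omega> = 1"
    and f_def: "f = (\<lambda>v. \<rho> * Mx V \<sigma> \<Omega> v)"
    and Omega_f: "Omega_of f = \<Omega>"
  shows
    "(\<forall>g. C2 g \<and> integrable lborel (\<lambda>v. g v *\<^sub>R v) \<longrightarrow>
        (\<forall>v. ((\<lambda>s. Qop V \<sigma> (\<lambda>w. f w + s * g w) v) has_real_derivative
              divg (\<lambda>w. \<sigma> *\<^sub>R grad g w + g w *\<^sub>R grad (Phi V \<Omega>) w
                   - (f w / (\<integral>u. (u \<bullet> \<Omega>) * f u \<partial>lborel))
                       *\<^sub>R (projP \<Omega> *v (\<integral>u. g u *\<^sub>R u \<partial>lborel))) v) (at 0))
        \<and> (\<forall>v. Lin V \<sigma> f g v = Lin V \<sigma> (Mx V \<sigma> \<Omega>) g v))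
     \<and> (\<forall>g \<psi>. C2 g \<and> compact_supp g \<and> C2 \<psi> \<and> compact_supp \<psi> \<longrightarrow>
          integrable lborel (\<lambda>v. Lin V \<sigma> f g v * \<psi> v)
        \<and> integrable lborel (\<lambda>v. g v *
             (\<sigma> * divg (\<lambda>w. Mx V \<sigma> \<Omega> w *\<^sub>R grad \<psi> w) v / Mx V \<sigma> \<Omega> v
              + (projP \<Omega> *v v) \<bullet> ((\<integral>w. Mx V \<sigma> \<Omega> w *\<^sub>R grad \<psi> w \<partial>lborel) /\<^sub>R c1 V \<sigma> \<Omega>)))
        \<and> (\<integral>v. Lin V \<sigma> f g v * \<psi> v \<partial>lborel)
          = (\<integral>v. g v *
             (\<sigma> * divg (\<lambda>w. Mx V \<sigma> \<Omega> w *\<^sub>R grad \<psi> w) v / Mx V \<sigma> \<Omega> v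
              + (projP \<Omega> *v v) \<bullet> ((\<integral>w. Mx V \<sigma> \<Omega> w *\<^sub>R grad \<psi> w \<partial>lborel) /\<^sub>R c1 V \<sigma> \<Omega>))
             \<partial>lborel))
     \<and> (\<forall>i v. Lin V \<sigma> f (\<lambda>w. f w * (w - \<Omega>) $ i) v
          = \<sigma> * partial_i i f v
            - divg (\<lambda>w. (f w / c1 V \<sigma> \<Omega>) *\<^sub>R (pressure V \<sigma> \<Omega> $ i)) v)"
proof -
  have "Omega_of (Mx V \<sigma> \<Omega>) = \<Omega>"
    using Omega_f unfolding f_def Omega_of_scale[OF rho_pos] .
  then interpret gibbs_equilibrium V \<sigma> \<Omega>
    using sigma_pos V_reg Omega_unit Z_fin second_moment by unfold_locales auto
  have "(\<integral>u. (u \<bullet> \<Omega>) * (\<rho> * M u) \<partial>lborel) = \<rho> * c1 V \<sigma> \<Omega>"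
    unfolding c1_def by (simp add: ac_simps)
  then have flux_eq: "(\<lambda>w. \<sigma> *\<^sub>R grad g w + g w *\<^sub>R grad (Phi V \<Omega>) w
      - (\<rho> * M w / (\<integral>u. (u \<bullet> \<Omega>) * (\<rho> * M u) \<partial>lborel)) *\<^sub>R (projP \<Omega> *v (\<integral>u. g u *\<^sub>R u \<partial>lborel)))
      = flux g" for g
    using rho_pos by (simp add: flux_def fun_eq_iff)
  show ?thesis
    unfolding f_def Lin_adjoint_def[symmetric] flux_eq
    using Qop_line_has_derivative[OF C2D(1,2) rho_pos] Lin_scale_invariant[OF C2D(1,2) rho_pos]
      integral_Lin_mult_eq_adjoint[OF _ _ _ _ rho_pos] Lin_velocity_moment[OF rho_pos]
    by blast
qed

end
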